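(* Let $X$ be a Banach space, $F\colon X\to\mathbb{R}$ locally Lipschitz at $\bar x\in X$, $(u,v)\in X\times X$, and let $\{(t_k,v^k)\}\subset(0,\infty)\times X$ with $t_k\downarrow 0$, $v^k\to v$, and $F\left(\bar x+t_ku+\tfrac12t_k^2v^k\right)\geqq F(\bar x)$ for all $k\in\mathbb{N}$. If $F^{\circ}(\bar x,u)=0$, then $F^{\circ}(\bar x,v)+F^{\circ\circ}(\bar x,u)\geqq 0$.
   Context: $F$ is locally Lipschitz at $\bar x$ if there are a neighborhood $U$ of $\bar x$ and $L\geqq 0$ with $|F(x)-F(y)|\leqq L\|x-y\|$ for all $x,y\in U$. Clarke's generalized directional derivative: $F^{\circ}(\bar x,u):=\limsup_{x\to\bar x,\ t\downarrow 0}\frac{F(x+tu)-F(x)}{t}$ (finite). Second-order upper generalized directional derivative: $F^{\circ\circ}(\bar x,u):=\limsup_{t\downarrow 0}\frac{F(\bar x+tu)-F(\bar x)-tF^{\circ}(\bar x,u)}{\frac12 t^2}$ (a value in $[-\infty,+\infty]$). *)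

theory Defs
  imports "HOL-Analysis.Analysis"
begin

definition locally_lipschitz_at :: "('a::real_normed_vector \<Rightarrow> real) \<Rightarrow> 'a \<Rightarrow> bool" where
  "locally_lipschitz_at F xbar \<longleftrightarrow>
     (\<exists>U L. open U \<and> xbar \<in> U \<and> L \<ge> 0 \<and>
        (\<forall>x\<in>U. \<forall>y\<in>U. \<bar>F x - F y\<bar> \<le> L * norm (x - y)))"

text \<open>Clarke's generalized directional derivative: limsup over x tending to xbar
  and t tending to 0 from the right (finite for locally Lipschitz F).\<close>
definition clarke_dd :: "('a::real_normed_vector \<Rightarrow> real) \<Rightarrow> 'a \<Rightarrow> 'a \<Rightarrow> real" where
  "clarke_dd F xbar u =
     real_of_ereal (Limsup (nhds xbar \<times>\<^sub>F at_right (0::real))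
        (\<lambda>(x, t). ereal ((F (x + t *\<^sub>R u) - F x) / t)))"

definition clarke_dd2 :: "('a::real_normed_vector \<Rightarrow> real) \<Rightarrow> 'a \<Rightarrow> 'a \<Rightarrow> ereal" where
  "clarke_dd2 F xbar u =
     Limsup (at_right (0::real))
        (\<lambda>t. ereal ((F (xbar + t *\<^sub>R u) - F xbar - t * clarke_dd F xbar u) / (t\<^sup>2 / 2)))"

end

theory Submission
  imports Defs
begin

text \<open>Put \<open>s = t\<^sup>2/2\<close> and \<open>y = xbar + t u\<close>. The nonnegative quotient
  \<open>(F (y + s v\<^sup>k) - F xbar) / s\<close> splits into three quotients: \<open>(F (y + s v\<^sup>k) - F (y + s v)) / s\<close>,
  which tends to 0 because \<open>F\<close> is Lipschitz and \<open>v\<^sup>k \<rightarrow> v\<close>; \<open>(F (y + s v) - F y) / s\<close>, whose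
  limsup is at most \<open>F\<degree>(xbar, v)\<close> since \<open>(y, s) \<rightarrow> (xbar, 0\<^sup>+)\<close>; and
  \<open>(F (xbar + t u) - F xbar) / (t\<^sup>2/2)\<close>, whose limsup is at most \<open>F\<degree>\<degree>(xbar, u)\<close> because
  \<open>F\<degree>(xbar, u) = 0\<close>. Arguing by contradiction, the three quotients are eventually below
  real bounds whose sum is negative, which avoids arithmetic in the extended reals.\<close>

lemma locally_lipschitz_atE:
  assumes "locally_lipschitz_at F x"
  obtains r L where "r > 0"
    "\<And>y z. y \<in> ball x r \<Longrightarrow> z \<in> ball x r \<Longrightarrow> \<bar>F y - F z\<bar> \<le> L * norm (y - z)"
proof -
  obtain U L where "open U" "x \<in> U"
    and Lip: "\<forall>y\<in>U. \<forall>z\<in>U. \<bar>F y - F z\<bar> \<le> L * norm (y - z)"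
    using assms unfolding locally_lipschitz_at_def by blast
  obtain r where "r > 0" "ball x r \<subseteq> U"
    using \<open>open U\<close> \<open>x \<in> U\<close> open_contains_ball by blast
  show thesis
  proof (rule that)
    show "\<bar>F y - F z\<bar> \<le> L * norm (y - z)" if "y \<in> ball x r" "z \<in> ball x r" for y z
      using Lip that \<open>ball x r \<subseteq> U\<close> by blast
  qed fact+
qed

definition clarke_quotient :: "('a::real_normed_vector \<Rightarrow> real) \<Rightarrow> 'a \<Rightarrow> 'a \<times> real \<Rightarrow> ereal" where
  "clarke_quotient F v = (\<lambda>(y, s). ereal ((F (y + s *\<^sub>R v) - F y) / s))"

lemma clarke_dd_eq_Limsup_clarke_quotient:
  "clarke_dd F x v = real_of_ereal (Limsup (nhds x \<times>\<^sub>F at_right 0) (clarke_quotient F v))"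
  unfolding clarke_dd_def clarke_quotient_def ..

lemma Limsup_clarke_quotient_bounded:
  assumes "locally_lipschitz_at F x"
  obtains L where "Limsup (nhds x \<times>\<^sub>F at_right 0) (clarke_quotient F v) \<le> ereal L"
proof -
  obtain r L where "r > 0"
    and Lip: "\<And>y z. y \<in> ball x r \<Longrightarrow> z \<in> ball x r \<Longrightarrow> \<bar>F y - F z\<bar> \<le> L * norm (y - z)"
    using locally_lipschitz_atE[OF assms] by blast
  let ?G = "nhds x \<times>\<^sub>F at_right (0::real)"
  have snd_lim: "(snd \<longlongrightarrow> 0) ?G"
    using filterlim_snd filterlim_at by blast
  have "((\<lambda>p. fst p + snd p *\<^sub>R v) \<longlongrightarrow> x) ?G"
    using tendsto_add[OF filterlim_fst tendsto_scaleR[OF snd_lim tendsto_const]] by simp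
  then have "eventually (\<lambda>p. fst p + snd p *\<^sub>R v \<in> ball x r) ?G"
    by (rule eventually_compose_filterlim[OF eventually_nhds_ball[OF \<open>r > 0\<close>]])
  moreover have "eventually (\<lambda>p. fst p \<in> ball x r) ?G"
    by (rule eventually_compose_filterlim[OF eventually_nhds_ball[OF \<open>r > 0\<close>] filterlim_fst])
  moreover have "eventually (\<lambda>p. snd p > 0) ?G"
    by (rule eventually_compose_filterlim[OF eventually_at_right_less filterlim_snd])
  ultimately have "eventually (\<lambda>p. clarke_quotient F v p \<le> ereal (L * norm v)) ?G"
  proof eventually_elim
    case (elim p)
    obtain y s where p: "p = (y, s)" by fastforce
    have "F (y + s *\<^sub>R v) - F y \<le> L * norm (s *\<^sub>R v)"
      using Lip[of "y + s *\<^sub>R v" y] elim by (simp add: p)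
    also have "\<dots> = s * (L * norm v)"
      using elim by (simp add: p)
    finally show ?case
      using elim by (simp add: p clarke_quotient_def divide_le_eq mult.commute)
  qed
  then show thesis
    by (intro that Limsup_bounded)
qed

lemma clarke_quotient_eventually_less:
  assumes "locally_lipschitz_at F x" "e > 0"
    and "filterlim (\<lambda>k. (y k, s k)) (nhds x \<times>\<^sub>F at_right 0) G"
  shows "eventually (\<lambda>k. (F (y k + s k *\<^sub>R v) - F (y k)) / s k < clarke_dd F x v + e) G"
proof -
  let ?Q = "Limsup (nhds x \<times>\<^sub>F at_right 0) (clarke_quotient F v)"
  obtain L where "?Q \<le> ereal L"
    using Limsup_clarke_quotient_bounded[OF assms(1)] by blast
  then have "?Q < ereal (clarke_dd F x v + e)"
    using \<open>e > 0\<close> unfolding clarke_dd_eq_Limsup_clarke_quotient by (cases ?Q) auto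
  then have "eventually (\<lambda>p. clarke_quotient F v p < ereal (clarke_dd F x v + e)) (nhds x \<times>\<^sub>F at_right 0)"
    by (rule Limsup_lessD)
  from eventually_compose_filterlim[OF this assms(3)] show ?thesis
    by (simp add: clarke_quotient_def)
qed

lemma lipschitz_quotient_tendsto_zero:
  assumes "locally_lipschitz_at F x"
    and "(y \<longlongrightarrow> x) G" "(s \<longlongrightarrow> 0) G" "eventually (\<lambda>k. s k > 0) G" "(w \<longlongrightarrow> v) G"
  shows "((\<lambda>k. (F (y k + s k *\<^sub>R w k) - F (y k + s k *\<^sub>R v)) / s k) \<longlongrightarrow> 0) G"
proof -
  obtain r L where "r > 0"
    and Lip: "\<And>y z. y \<in> ball x r \<Longrightarrow> z \<in> ball x r \<Longrightarrow> \<bar>F y - F z\<bar> \<le> L * norm (y - z)"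
    using locally_lipschitz_atE[OF assms(1)] by blast
  have "((\<lambda>k. y k + s k *\<^sub>R w k) \<longlongrightarrow> x) G"
    using tendsto_add[OF assms(2) tendsto_scaleR[OF assms(3,5)]] by simp
  then have "eventually (\<lambda>k. y k + s k *\<^sub>R w k \<in> ball x r) G"
    by (rule eventually_compose_filterlim[OF eventually_nhds_ball[OF \<open>r > 0\<close>]])
  moreover have "((\<lambda>k. y k + s k *\<^sub>R v) \<longlongrightarrow> x) G"
    using tendsto_add[OF assms(2) tendsto_scaleR[OF assms(3) tendsto_const]] by simp
  then have "eventually (\<lambda>k. y k + s k *\<^sub>R v \<in> ball x r) G"
    by (rule eventually_compose_filterlim[OF eventually_nhds_ball[OF \<open>r > 0\<close>]])
  ultimately have "eventually (\<lambda>k. norm ((F (y k + s k *\<^sub>R w k) - F (y k + s k *\<^sub>R v)) / s k)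
      \<le> L * norm (w k - v)) G"
    using assms(4)
  proof eventually_elim
    case (elim k)
    have "\<bar>F (y k + s k *\<^sub>R w k) - F (y k + s k *\<^sub>R v)\<bar> \<le> L * norm (s k *\<^sub>R (w k - v))"
      using Lip[OF elim(1,2)] by (simp add: scaleR_diff_right)
    also have "\<dots> = s k * (L * norm (w k - v))"
      using elim(3) by simp
    finally show ?case
      using elim(3) by (simp add: divide_le_eq mult.commute)
  qed
  moreover have "((\<lambda>k. L * norm (w k - v)) \<longlongrightarrow> 0) G"
    using tendsto_mult_right_zero[OF tendsto_norm_zero[OF Lim_null[THEN iffD1, OF assms(5)]]] by simp
  ultimately show ?thesis
    by (rule Lim_null_comparison)
qed

lemma clarke_dd2_eventually_less:
  assumes "clarke_dd2 F x u < ereal r" and "filterlim t (at_right 0) G"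
  shows "eventually (\<lambda>k. (F (x + t k *\<^sub>R u) - F x - t k * clarke_dd F x u) / ((t k)\<^sup>2 / 2) < r) G"
proof -
  have "eventually (\<lambda>\<tau>. ereal ((F (x + \<tau> *\<^sub>R u) - F x - \<tau> * clarke_dd F x u) / (\<tau>\<^sup>2 / 2))
      < ereal r) (at_right 0)"
    using assms(1) unfolding clarke_dd2_def by (rule Limsup_lessD)
  from eventually_compose_filterlim[OF this assms(2)] show ?thesis
    by simp
qed

theorem lemma2:
  fixes F :: "'a::banach \<Rightarrow> real" and xbar u v :: 'a
    and t :: "nat \<Rightarrow> real" and vs :: "nat \<Rightarrow> 'a"
  assumes "locally_lipschitz_at F xbar"
    and "\<And>k. t k > 0"
    and "decseq t" and "t \<longlonglongrightarrow> 0"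
    and "vs \<longlonglongrightarrow> v"
    and "\<And>k. F (xbar + t k *\<^sub>R u + ((t k)\<^sup>2 / 2) *\<^sub>R vs k) \<ge> F xbar"
    and "clarke_dd F xbar u = 0"
  shows "ereal (clarke_dd F xbar v) + clarke_dd2 F xbar u \<ge> 0"
proof (rule ccontr)
  define C where "C = clarke_dd F xbar v"
  assume "\<not> ?thesis"
  then have "clarke_dd2 F xbar u < ereal (- C)"
    unfolding C_def by (cases "clarke_dd2 F xbar u") auto
  then obtain r where r: "clarke_dd2 F xbar u < ereal r" "r < - C"
    using ereal_dense2 by (metis less_ereal.simps(1) order_less_trans)
  define e where "e = (- C - r) / 2"
  define s where "s = (\<lambda>k. (t k)\<^sup>2 / 2)"
  define y where "y = (\<lambda>k. xbar + t k *\<^sub>R u)"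
  have s_pos: "s k > 0" for k
    unfolding s_def using assms(2)[of k] by simp
  have t_at: "filterlim t (at_right 0) sequentially"
    using assms(2) by (intro tendsto_imp_filterlim_at_right[OF assms(4)] always_eventually) simp
  have s_lim: "s \<longlonglongrightarrow> 0"
    unfolding s_def using assms(4) by (auto intro: tendsto_eq_intros)
  then have s_at: "filterlim s (at_right 0) sequentially"
    using s_pos by (intro tendsto_imp_filterlim_at_right always_eventually) simp_all
  have y_lim: "y \<longlonglongrightarrow> xbar"
    unfolding y_def using tendsto_add[OF tendsto_const tendsto_scaleR[OF assms(4) tendsto_const], of xbar u]
    by simp
  have "eventually (\<lambda>k. (F (y k + s k *\<^sub>R vs k) - F (y k + s k *\<^sub>R v)) / s k < e) sequentially"
    using lipschitz_quotient_tendsto_zero[OF assms(1) y_lim s_lim _ assms(5)] s_pos r(2)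
    by (intro order_tendstoD) (auto simp: e_def)
  moreover have "eventually (\<lambda>k. (F (y k + s k *\<^sub>R v) - F (y k)) / s k < C + e) sequentially"
    using clarke_quotient_eventually_less[OF assms(1) _ filterlim_Pair[OF y_lim s_at]] r(2)
    unfolding C_def e_def by simp
  moreover have "eventually (\<lambda>k. (F (y k) - F xbar) / s k < r) sequentially"
    using clarke_dd2_eventually_less[OF r(1) t_at] assms(7) by (simp add: y_def s_def)
  ultimately obtain k where
    "(F (y k + s k *\<^sub>R vs k) - F (y k + s k *\<^sub>R v)) / s k < e"
    "(F (y k + s k *\<^sub>R v) - F (y k)) / s k < C + e"
    "(F (y k) - F xbar) / s k < r"
    using eventually_happens'[OF sequentially_bot eventually_conj[OF _ eventually_conj]] by blast
  moreover have "(F (y k + s k *\<^sub>R vs k) - F xbar) / s k \<ge> 0"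
    using assms(6)[of k] s_pos[of k] by (simp add: y_def s_def add.assoc)
  moreover have "(F (y k + s k *\<^sub>R vs k) - F xbar) / s k =
      (F (y k + s k *\<^sub>R vs k) - F (y k + s k *\<^sub>R v)) / s k + (F (y k + s k *\<^sub>R v) - F (y k)) / s k
      + (F (y k) - F xbar) / s k"
    by (simp add: add_divide_distrib[symmetric] diff_divide_distrib[symmetric])
  ultimately have "0 < e + (C + e) + r"
    by linarith
  then show False
    unfolding e_def by simp
qed

end
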